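(* Let $n \ge 3$, let $t,s\ge1$ be odd and coprime, let $r\in\mathbb{Z}$ with $r^s\equiv 1 \bmod t$, and let $a,b\in\mathbb{Z}/t$ with $a^2\equiv b^2 \equiv 1 \bmod t$. Let $G = (C_t\rtimes_{(r)} C_s)\rtimes_{(a,b)} Q_{2^n}$. Then, for $m \ge 1$ odd, $G$ has a quotient isomorphic to $Q_{2^n m}$ if and only if $m \mid t$, $r\equiv 1 \bmod m$, and $Q_{2^n m}\cong C_m\rtimes_{(a,b)} Q_{2^n}$.
   Context: $C_t\rtimes_{(r)}C_s = \langle u, v\mid u^t = v^s = 1, vuv^{-1} = u^r\rangle$. $Q_{2^n} = \langle x,y\mid x^{2^{n-2}}=y^2, yxy^{-1}=x^{-1}\rangle$, and $Q_{2^n}$ acts on $C_t\rtimes_{(r)}C_s$ by $x: u\mapsto u^a, v\mapsto v$ and $y: u\mapsto u^b, v \mapsto v$; $G$ is the resulting semidirect product. Similarly $C_m\rtimes_{(a,b)}Q_{2^n}$ denotes the semidirect product in which $x$ and $y$ act on a generator of $C_m$ by raising to the powers $a$ and $b$ (read mod $m$). $Q_{4k}=\langle x,y\mid x^k=y^2,yxy^{-1}=x^{-1}\rangle$. *)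

theory Defs
  imports "HOL-Algebra.Algebra" "HOL-Number_Theory.Number_Theory"
begin

(* Generalized quaternion group Q_{4k} = <x,y | x^k = y^2, y x y^-1 = x^-1>,
   element (i,e) represents x^i y^(if e then 1 else 0), 0 <= i < 2k. *)
definition quat :: "nat \<Rightarrow> (int \<times> bool) monoid" where
  "quat k = \<lparr> carrier = {0..<2 * int k} \<times> UNIV,
     monoid.mult = (\<lambda>(i, e) (j, f).
        ((i + (if e then - j else j) + (if e \<and> f then int k else 0)) mod (2 * int k),
         e \<noteq> f)),
     one = (0, False) \<rparr>"

(* exponent by which q = x^i y^e acts on a cyclic generator: x -> a, y -> b *)
definition qchar :: "int \<Rightarrow> int \<Rightarrow> int \<times> bool \<Rightarrow> int" where
  "qchar a b q = a ^ nat (fst q) * (if snd q then b else 1)"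

(* G = (C_t \<rtimes>_(r) C_s) \<rtimes>_(a,b) Q_{2^n}; element (i,j,q) represents u^i v^j q *)
definition Ggrp :: "nat \<Rightarrow> nat \<Rightarrow> nat \<Rightarrow> int \<Rightarrow> int \<Rightarrow> int
                      \<Rightarrow> (int \<times> int \<times> (int \<times> bool)) monoid" where
  "Ggrp n t s r a b = \<lparr> carrier = {0..<int t} \<times> {0..<int s} \<times> carrier (quat (2 ^ (n - 2))),
     monoid.mult = (\<lambda>(i, j, q) (k, l, q').
        ((i + r ^ nat j * qchar a b q * k) mod int t, (j + l) mod int s,
         q \<otimes>\<^bsub>quat (2 ^ (n - 2))\<^esub> q')),
     one = (0, 0, \<one>\<^bsub>quat (2 ^ (n - 2))\<^esub>) \<rparr>"

(* C_m \<rtimes>_(a,b) Q_{2^n}; element (i,q) represents w^i q, x,y act by w -> w^a, w^b *)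
definition Csemi :: "nat \<Rightarrow> nat \<Rightarrow> int \<Rightarrow> int \<Rightarrow> (int \<times> (int \<times> bool)) monoid" where
  "Csemi m n a b = \<lparr> carrier = {0..<int m} \<times> carrier (quat (2 ^ (n - 2))),
     monoid.mult = (\<lambda>(i, q) (k, q').
        ((i + qchar a b q * k) mod int m, q \<otimes>\<^bsub>quat (2 ^ (n - 2))\<^esub> q')),
     one = (0, \<one>\<^bsub>quat (2 ^ (n - 2))\<^esub>) \<rparr>"

end

(*
  Both G = C_t semidirect (C_s x Q_(2^n)) and C_m semidirect Q_(2^n) are semidirect products of a
  cyclic group by a group acting on it through a character.

  If m | t and r = 1 (mod m), reducing the C_t-coordinate mod m and forgetting the C_s-coordinate is
  a surjective homomorphism from G onto C_m semidirect Q_(2^n).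

  Conversely, let phi be a surjection of G onto Q_(2^n m) = <x, y>. The images of u and v have odd
  order, so they lie in <x>, say phi u = x^gamma. Since v commutes with Q_(2^n), whose image contains
  an element outside <x>, phi v squares to 1, hence phi v = 1. Writing x = phi (u^i q), where phi q
  has 2-power order, shows that gamma is a unit mod m; then u^t = 1 gives m | t, and v u v^-1 = u^r
  gives r = 1 (mod m). Homomorphisms out of C_m semidirect H are determined by the image g of the
  generator and a homomorphism f on H with f(h) g f(h)^-1 = g^(chi h); so w^i q |-> (phi u)^i phi q
  is a surjective homomorphism from C_m semidirect Q_(2^n) onto Q_(2^n m), and both have order 2^n m.
*)
theory Submission
  imports Defs
begin

lemma (in group) pow_eq_one_coprime:
  assumes "x \<in> carrier G" "x [^] (p::nat) = \<one>" "x [^] (q::nat) = \<one>" "coprime p q"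
  shows "x = \<one>"
proof -
  have "ord x dvd p" "ord x dvd q"
    using assms by (simp_all add: pow_eq_id)
  with \<open>coprime p q\<close> have "ord x = 1"
    using coprime_common_divisor [of p q "ord x"] by simp
  with assms show ?thesis
    by (metis ord_eq_1 One_nat_def)
qed

lemma (in group) int_pow_mod:
  fixes M z :: int
  assumes "g \<in> carrier G" "g [^] M = \<one>"
  shows "g [^] (z mod M) = g [^] z"
proof -
  have "int (ord g) dvd M"
    using assms by (simp add: int_pow_eq_id)
  also have "M dvd z - z mod M"
    by (simp add: minus_mod_eq_mult_div)
  finally show ?thesis
    using assms(1) by (simp add: int_pow_eq)
qed

lemma (in group) twisted_commute_nat_pow:
  assumes "y \<in> carrier G" "g \<in> carrier G" "y \<otimes> g = g [^] e \<otimes> y"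
  shows "y \<otimes> g [^] (n::nat) = g [^] (e * int n) \<otimes> y"
proof (induction n)
  case 0
  then show ?case
    using assms by simp
next
  case (Suc n)
  have "y \<otimes> g [^] Suc n = (y \<otimes> g [^] n) \<otimes> g"
    using assms by (simp add: m_assoc)
  also have "\<dots> = g [^] (e * int n) \<otimes> (y \<otimes> g)"
    using assms by (simp add: Suc m_assoc)
  also have "\<dots> = (g [^] (e * int n) \<otimes> g [^] e) \<otimes> y"
    using assms by (simp add: m_assoc)
  also have "\<dots> = g [^] (e * int n + e) \<otimes> y"
    using assms by (simp add: int_pow_mult)
  also have "e * int n + e = e * int (Suc n)"
    by (simp add: algebra_simps)
  finally show ?case .
qed

lemma (in group) quotient_iso_iff_epi:
  assumes "group K"
  shows "(\<exists>N. N \<lhd> G \<and> G Mod N \<cong> K) \<longleftrightarrow> epi G K \<noteq> {}"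
proof
  assume "\<exists>N. N \<lhd> G \<and> G Mod N \<cong> K"
  then obtain N \<psi> where N: "N \<lhd> G" and \<psi>: "\<psi> \<in> iso (G Mod N) K"
    by (auto simp: is_iso_def)
  have "(\<lambda>x. N #> x) \<in> epi G (G Mod N)"
    using normal.r_coset_hom_Mod [OF N] by (simp add: epi_def carrier_FactGroup)
  moreover have "\<psi> \<in> epi (G Mod N) K"
    using \<psi> by (simp add: iso_iff_mon_epi)
  ultimately have "\<psi> \<circ> (\<lambda>x. N #> x) \<in> epi G K"
    by (rule epi_compose)
  then show "epi G K \<noteq> {}"
    by blast
next
  assume "epi G K \<noteq> {}"
  then obtain \<phi> where \<phi>: "\<phi> \<in> hom G K" "\<phi> ` carrier G = carrier K"
    by (auto simp: epi_def)
  interpret \<phi>: group_hom G K \<phi>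
    using assms \<phi>(1) is_group by (simp add: group_hom_def group_hom_axioms_def)
  show "\<exists>N. N \<lhd> G \<and> G Mod N \<cong> K"
    using \<phi>.normal_kernel \<phi>.FactGroup_iso [OF \<phi>(2)] by blast
qed

section \<open>Generalized quaternion groups\<close>

lemma quat_mult:
  "(i, e) \<otimes>\<^bsub>quat k\<^esub> (j, f) =
     ((i + (if e then - j else j) + (if e \<and> f then int k else 0)) mod (2 * int k), e \<noteq> f)"
  by (simp add: quat_def)

lemma quat_one [simp]: "\<one>\<^bsub>quat k\<^esub> = (0, False)"
  by (simp add: quat_def)

lemma carrier_quat: "carrier (quat k) = {0..<2 * int k} \<times> UNIV"
  by (simp add: quat_def)

lemma card_quat: "card (carrier (quat k)) = 4 * k"
  by (simp add: carrier_quat card_cartesian_product)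

lemma dvd_mod_diff_self: "(c::int) dvd a mod c - a"
  using mod_eq_dvd_iff [of "a mod c" c a] by simp

lemma quat_mult_mod_left: "(i mod (2 * int k), e) \<otimes>\<^bsub>quat k\<^esub> y = (i, e) \<otimes>\<^bsub>quat k\<^esub> y"
  using dvd_mod_diff_self [of "2 * int k" i] by (cases y) (simp add: quat_mult mod_eq_dvd_iff)

lemma quat_mult_mod_right: "x \<otimes>\<^bsub>quat k\<^esub> (j mod (2 * int k), f) = x \<otimes>\<^bsub>quat k\<^esub> (j, f)"
  using dvd_mod_diff_self [of "2 * int k" j]
  by (cases x) (auto simp: quat_mult mod_eq_dvd_iff dvd_diff_commute)

lemma quat_assoc: "x \<otimes>\<^bsub>quat k\<^esub> y \<otimes>\<^bsub>quat k\<^esub> z = x \<otimes>\<^bsub>quat k\<^esub> (y \<otimes>\<^bsub>quat k\<^esub> z)"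
proof -
  obtain i e j f l g where xyz: "x = (i, e)" "y = (j, f)" "z = (l, g)"
    by (cases x, cases y, cases z)
  have "x \<otimes>\<^bsub>quat k\<^esub> y \<otimes>\<^bsub>quat k\<^esub> z =
      (i + (if e then - j else j) + (if e \<and> f then int k else 0), e \<noteq> f) \<otimes>\<^bsub>quat k\<^esub> (l, g)"
    by (simp only: xyz quat_mult [where i = i] quat_mult_mod_left)
  moreover have "x \<otimes>\<^bsub>quat k\<^esub> (y \<otimes>\<^bsub>quat k\<^esub> z) =
      (i, e) \<otimes>\<^bsub>quat k\<^esub> (j + (if f then - l else l) + (if f \<and> g then int k else 0), f \<noteq> g)"
    by (simp only: xyz quat_mult [where i = j] quat_mult_mod_right)
  ultimately show ?thesis
    by (cases e; cases f; cases g) (simp_all add: quat_mult mod_eq_dvd_iff)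
qed

lemma group_quat:
  assumes "0 < k"
  shows "group (quat k)"
proof (rule groupI)
  fix x
  assume "x \<in> carrier (quat k)"
  then obtain i e where x: "x = (i, e)" and i: "0 \<le> i" "i < 2 * int k"
    by (auto simp: carrier_quat)
  let ?y = "if e then ((i + int k) mod (2 * int k), True) else ((- i) mod (2 * int k), False)"
  have "?y \<otimes>\<^bsub>quat k\<^esub> x = \<one>\<^bsub>quat k\<^esub>"
  proof (cases e)
    case True
    then show ?thesis
      by (simp only: x if_True quat_mult_mod_left) (simp add: quat_mult)
  next
    case False
    then show ?thesis
      by (simp add: x quat_mult mod_simps)
  qed
  moreover have "?y \<in> carrier (quat k)"
    using assms by (simp add: carrier_quat)
  ultimately show "\<exists>y\<in>carrier (quat k). y \<otimes>\<^bsub>quat k\<^esub> x = \<one>\<^bsub>quat k\<^esub>"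
    by blast
next
  fix x y
  assume "x \<in> carrier (quat k)" "y \<in> carrier (quat k)"
  then show "x \<otimes>\<^bsub>quat k\<^esub> y \<in> carrier (quat k)"
    using assms by (cases x, cases y) (simp add: carrier_quat quat_mult)
next
  fix x
  assume "x \<in> carrier (quat k)"
  then show "\<one>\<^bsub>quat k\<^esub> \<otimes>\<^bsub>quat k\<^esub> x = x"
    by (cases x) (simp add: carrier_quat quat_mult)
qed (use assms in \<open>simp_all add: carrier_quat quat_assoc\<close>)

lemma snd_quat_mult: "snd (x \<otimes>\<^bsub>quat k\<^esub> y) = (snd x \<noteq> snd y)"
  by (cases x; cases y) (simp add: quat_mult)

lemma snd_quat_pow: "snd (x [^]\<^bsub>quat k\<^esub> (N::nat)) \<longleftrightarrow> odd N \<and> snd x"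
  by (induction N) (auto simp: snd_quat_mult)

(* (c, False) = x^c lies in the cyclic subgroup <x> ("rotations"); (c, True) = x^c y lies outside it
   ("reflections"). *)
lemma quat_rotation_nat_pow:
  "(c, False) [^]\<^bsub>quat k\<^esub> (N::nat) = ((int N * c) mod (2 * int k), False)"
  by (induction N) (simp_all add: quat_mult mod_simps algebra_simps)

lemma quat_rotation_int_pow:
  assumes "0 < k"
  shows "(c, False) [^]\<^bsub>quat k\<^esub> (z::int) = ((z * c) mod (2 * int k), False)"
proof (cases z rule: int_cases2)
  case (nonneg N)
  then show ?thesis
    by (simp add: int_pow_int quat_rotation_nat_pow)
next
  case (nonpos N)
  interpret quat: group "quat k"
    using assms by (rule group_quat)
  have "inv\<^bsub>quat k\<^esub> ((int N * c) mod (2 * int k), False) = ((- (int N * c)) mod (2 * int k), False)"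
    using assms by (intro quat.inv_equality) (simp_all add: carrier_quat quat_mult mod_simps)
  with nonpos show ?thesis
    by (simp add: int_pow_def2 quat_rotation_nat_pow)
qed

lemma quat_rotation_commute_reflection:
  assumes "(d, False) \<otimes>\<^bsub>quat k\<^esub> (e, True) = (e, True) \<otimes>\<^bsub>quat k\<^esub> (d, False)"
  shows "(d, False) [^]\<^bsub>quat k\<^esub> (2::nat) = \<one>\<^bsub>quat k\<^esub>"
proof -
  from assms have "(d + e) mod (2 * int k) = (e - d) mod (2 * int k)"
    by (simp add: quat_mult add.commute)
  then have "2 * int k dvd 2 * d"
    by (simp add: mod_eq_dvd_iff)
  then show ?thesis
    by (simp add: quat_rotation_nat_pow)
qed

section \<open>Semidirect products with a cyclic normal subgroup\<close>

(* (i, h) stands for w^i h, where w generates the cyclic group of order M and h w h^-1 = w^(\<chi> h). *)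
definition cyclic_semidirect :: "int \<Rightarrow> ('a, 'b) monoid_scheme \<Rightarrow> ('a \<Rightarrow> int) \<Rightarrow> (int \<times> 'a) monoid"
  where "cyclic_semidirect M H \<chi> =
    \<lparr>carrier = {0..<M} \<times> carrier H,
     monoid.mult = (\<lambda>(i, h) (k, h'). ((i + \<chi> h * k) mod M, h \<otimes>\<^bsub>H\<^esub> h')),
     one = (0, \<one>\<^bsub>H\<^esub>)\<rparr>"

lemma carrier_cyclic_semidirect [simp]: "carrier (cyclic_semidirect M H \<chi>) = {0..<M} \<times> carrier H"
  by (simp add: cyclic_semidirect_def)

lemma one_cyclic_semidirect [simp]: "\<one>\<^bsub>cyclic_semidirect M H \<chi>\<^esub> = (0, \<one>\<^bsub>H\<^esub>)"
  by (simp add: cyclic_semidirect_def)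

lemma mult_cyclic_semidirect [simp]:
  "(i, h) \<otimes>\<^bsub>cyclic_semidirect M H \<chi>\<^esub> (k, h') = ((i + \<chi> h * k) mod M, h \<otimes>\<^bsub>H\<^esub> h')"
  by (simp add: cyclic_semidirect_def)

lemma (in group) hom_from_cyclic_semidirect:
  assumes f: "f \<in> hom H G" and g: "g \<in> carrier G" "g [^] M = \<one>"
    and twist: "\<And>h. h \<in> carrier H \<Longrightarrow> f h \<otimes> g = g [^] \<chi> h \<otimes> f h"
  shows "(\<lambda>(i, h). g [^] i \<otimes> f h) \<in> hom (cyclic_semidirect M H \<chi>) G"
proof (rule homI)
  fix x
  assume "x \<in> carrier (cyclic_semidirect M H \<chi>)"
  then show "(\<lambda>(i, h). g [^] i \<otimes> f h) x \<in> carrier G"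
    using f g by (auto simp: hom_def)
next
  fix x y
  assume "x \<in> carrier (cyclic_semidirect M H \<chi>)" "y \<in> carrier (cyclic_semidirect M H \<chi>)"
  then obtain i h k h' where xy: "x = (i, h)" "y = (k, h')" and "0 \<le> k"
    and h: "h \<in> carrier H" "h' \<in> carrier H"
    by auto
  have fh: "f h \<in> carrier G" "f h' \<in> carrier G"
    using f h by (auto simp: hom_def)
  have "g [^] ((i + \<chi> h * k) mod M) \<otimes> f (h \<otimes>\<^bsub>H\<^esub> h') = g [^] i \<otimes> (g [^] (\<chi> h * k) \<otimes> f h) \<otimes> f h'"
    using f g h fh by (simp add: int_pow_mod hom_mult int_pow_mult m_assoc)
  also have "g [^] (\<chi> h * k) \<otimes> f h = f h \<otimes> g [^] k"
    using twisted_commute_nat_pow [OF fh(1) g(1) twist [OF h(1)], of "nat k"] \<open>0 \<le> k\<close>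
    by (simp add: int_pow_int [symmetric])
  finally show "(\<lambda>(i, h). g [^] i \<otimes> f h) (x \<otimes>\<^bsub>cyclic_semidirect M H \<chi>\<^esub> y) =
      (\<lambda>(i, h). g [^] i \<otimes> f h) x \<otimes> (\<lambda>(i, h). g [^] i \<otimes> f h) y"
    using g fh by (simp add: xy m_assoc)
qed

locale cyclic_action = group H for H (structure) +
  fixes M :: int and \<chi> :: "'a \<Rightarrow> int"
  assumes modulus_pos: "0 < M"
    and act_one: "\<chi> \<one> = 1"
    and act_mult: "\<lbrakk>h \<in> carrier H; h' \<in> carrier H\<rbrakk> \<Longrightarrow> [\<chi> (h \<otimes> h') = \<chi> h * \<chi> h'] (mod M)"
begin

lemma group_cyclic_semidirect: "group (cyclic_semidirect M H \<chi>)"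
proof (rule groupI)
  fix x y z
  assume "x \<in> carrier (cyclic_semidirect M H \<chi>)" "y \<in> carrier (cyclic_semidirect M H \<chi>)"
    "z \<in> carrier (cyclic_semidirect M H \<chi>)"
  then obtain i h k h' l h'' where xyz: "x = (i, h)" "y = (k, h')" "z = (l, h'')"
    and h: "h \<in> carrier H" "h' \<in> carrier H" "h'' \<in> carrier H"
    by auto
  have "[(i + \<chi> h * k) mod M + \<chi> (h \<otimes> h') * l = i + \<chi> h * (k + \<chi> h' * l)] (mod M)"
  proof -
    have "[(i + \<chi> h * k) mod M + \<chi> (h \<otimes> h') * l = (i + \<chi> h * k) + (\<chi> h * \<chi> h') * l] (mod M)"
      using act_mult [OF h(1,2)] by (intro cong_add cong_mult cong_refl) (simp add: cong_def)
    then show ?thesis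
      by (simp add: algebra_simps)
  qed
  also have "[i + \<chi> h * (k + \<chi> h' * l) = i + \<chi> h * ((k + \<chi> h' * l) mod M)] (mod M)"
    by (intro cong_add cong_mult cong_refl) (simp add: cong_def)
  finally show "x \<otimes>\<^bsub>cyclic_semidirect M H \<chi>\<^esub> y \<otimes>\<^bsub>cyclic_semidirect M H \<chi>\<^esub> z =
      x \<otimes>\<^bsub>cyclic_semidirect M H \<chi>\<^esub> (y \<otimes>\<^bsub>cyclic_semidirect M H \<chi>\<^esub> z)"
    using h by (simp add: xyz cong_def m_assoc)
next
  fix x
  assume "x \<in> carrier (cyclic_semidirect M H \<chi>)"
  then obtain i h where x: "x = (i, h)" and "0 \<le> i" "i < M" "h \<in> carrier H"
    by auto
  let ?y = "((- (\<chi> (inv h) * i)) mod M, inv h)"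
  have "?y \<otimes>\<^bsub>cyclic_semidirect M H \<chi>\<^esub> x = \<one>\<^bsub>cyclic_semidirect M H \<chi>\<^esub>"
    using \<open>h \<in> carrier H\<close> by (simp add: x mod_simps)
  moreover have "?y \<in> carrier (cyclic_semidirect M H \<chi>)"
    using modulus_pos \<open>h \<in> carrier H\<close> by simp
  ultimately show "\<exists>y\<in>carrier (cyclic_semidirect M H \<chi>). y \<otimes>\<^bsub>cyclic_semidirect M H \<chi>\<^esub> x =
      \<one>\<^bsub>cyclic_semidirect M H \<chi>\<^esub>"
    by blast
qed (use modulus_pos in \<open>auto simp: act_one\<close>)

lemma generator_nat_pow:
  "(1 mod M, \<one>) [^]\<^bsub>cyclic_semidirect M H \<chi>\<^esub> (n::nat) = (int n mod M, \<one>)"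
  by (induction n) (simp_all add: act_one mod_simps add.commute)

lemma generator_int_pow:
  "(1 mod M, \<one>) [^]\<^bsub>cyclic_semidirect M H \<chi>\<^esub> (z::int) = (z mod M, \<one>)"
proof (cases z rule: int_cases2)
  case (nonneg n)
  then show ?thesis
    by (simp add: int_pow_int generator_nat_pow)
next
  case (nonpos n)
  interpret S: group "cyclic_semidirect M H \<chi>"
    by (rule group_cyclic_semidirect)
  have "inv\<^bsub>cyclic_semidirect M H \<chi>\<^esub> (int n mod M, \<one>) = ((- int n) mod M, \<one>)"
    using modulus_pos by (intro S.inv_equality) (simp_all add: act_one mod_simps)
  with nonpos show ?thesis
    by (simp add: int_pow_def2 generator_nat_pow)
qed

lemma cyclic_semidirect_decompose:
  assumes "i \<in> {0..<M}" "h \<in> carrier H"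
  shows "(i, h) = (1 mod M, \<one>) [^]\<^bsub>cyclic_semidirect M H \<chi>\<^esub> i \<otimes>\<^bsub>cyclic_semidirect M H \<chi>\<^esub> (0, h)"
  using assms by (simp add: generator_int_pow act_one)

lemma cyclic_semidirect_twist:
  assumes "h \<in> carrier H"
  shows "(0, h) \<otimes>\<^bsub>cyclic_semidirect M H \<chi>\<^esub> (1 mod M, \<one>) =
    (1 mod M, \<one>) [^]\<^bsub>cyclic_semidirect M H \<chi>\<^esub> \<chi> h \<otimes>\<^bsub>cyclic_semidirect M H \<chi>\<^esub> (0, h)"
  using assms by (simp add: generator_int_pow act_one mod_simps)

lemma hom_cyclic_semidirect_embed: "(\<lambda>h. (0, h)) \<in> hom H (cyclic_semidirect M H \<chi>)"
  using modulus_pos by (intro homI) simp_all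

end

section \<open>The groups Ggrp and Csemi as cyclic semidirect products\<close>

lemma qchar_one [simp]: "qchar a b (0, False) = 1"
  by (simp add: qchar_def)

lemma cong_pow_mod_order:
  fixes r M :: int
  assumes "[r ^ s = 1] (mod M)"
  shows "[r ^ N = r ^ (N mod s)] (mod M)"
proof -
  have "r ^ N = r ^ (s * (N div s) + N mod s)"
    by simp
  also have "\<dots> = (r ^ s) ^ (N div s) * r ^ (N mod s)"
    by (simp only: power_add power_mult)
  also have "[\<dots> = 1 ^ (N div s) * r ^ (N mod s)] (mod M)"
    by (rule cong_mult [OF cong_pow [OF assms] cong_refl])
  finally show ?thesis
    by simp
qed

lemma qchar_mult:
  assumes "0 < k" "even k" and a: "[a ^ 2 = 1] (mod M)" and b: "[b ^ 2 = 1] (mod M)"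
    and "q \<in> carrier (quat k)" "q' \<in> carrier (quat k)"
  shows "[qchar a b (q \<otimes>\<^bsub>quat k\<^esub> q') = qchar a b q * qchar a b q'] (mod M)"
proof -
  obtain i e j f where q: "q = (i, e)" and q': "q' = (j, f)" and "0 \<le> i" "0 \<le> j"
    using assms(5,6) by (cases q, cases q') (auto simp: carrier_quat)
  define w where "w = (i + (if e then - j else j) + (if e \<and> f then int k else 0)) mod (2 * int k)"
  have "0 \<le> w"
    using \<open>0 < k\<close> by (simp add: w_def)
  have "even w \<longleftrightarrow> even (i + (if e then - j else j) + (if e \<and> f then int k else 0))"
    unfolding w_def by (intro dvd_mod_iff) simp
  also have "\<dots> \<longleftrightarrow> even (i + j)"
    using \<open>even k\<close> by auto
  finally have "even (nat w) \<longleftrightarrow> even (nat i + nat j)"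
    using \<open>0 \<le> w\<close> \<open>0 \<le> i\<close> \<open>0 \<le> j\<close> by (simp add: even_nat_iff nat_add_distrib [symmetric])
  then have parity: "nat w mod 2 = (nat i + nat j) mod 2"
    by (metis odd_iff_mod_2_eq_one even_iff_mod_2_eq_zero)
  have "[a ^ nat w = a ^ (nat w mod 2)] (mod M)"
    using a by (rule cong_pow_mod_order)
  also have "a ^ (nat w mod 2) = a ^ ((nat i + nat j) mod 2)"
    by (simp only: parity)
  also have "[\<dots> = a ^ (nat i + nat j)] (mod M)"
    using a by (rule cong_pow_mod_order [THEN cong_sym])
  finally have "[a ^ nat w = a ^ nat i * a ^ nat j] (mod M)"
    by (simp add: power_add)
  moreover have "[(if e \<noteq> f then b else 1) = (if e then b else 1) * (if f then b else 1)] (mod M)"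
    using b by (auto simp: power2_eq_square cong_sym)
  ultimately have "[a ^ nat w * (if e \<noteq> f then b else 1) =
      (a ^ nat i * a ^ nat j) * ((if e then b else 1) * (if f then b else 1))] (mod M)"
    by (rule cong_mult)
  moreover have "q \<otimes>\<^bsub>quat k\<^esub> q' = (w, e \<noteq> f)"
    by (simp add: q q' quat_mult w_def)
  moreover have "qchar a b q * qchar a b q' =
      (a ^ nat i * a ^ nat j) * ((if e then b else 1) * (if f then b else 1))"
    by (simp add: q q' qchar_def)
  ultimately show ?thesis
    by (simp add: qchar_def)
qed

lemma cyclic_action_qchar:
  assumes "0 < k" "even k" "0 < M" "[a ^ 2 = 1] (mod M)" "[b ^ 2 = 1] (mod M)"
  shows "cyclic_action (quat k) M (qchar a b)"
proof -
  interpret quat: group "quat k"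
    using assms(1) by (rule group_quat)
  show ?thesis
    using assms by unfold_locales (simp_all add: qchar_mult)
qed

lemma cyclic_action_power_qchar:
  assumes "0 < k" "even k" "0 < s" "0 < M"
    and r: "[r ^ s = 1] (mod M)" and "[a ^ 2 = 1] (mod M)" "[b ^ 2 = 1] (mod M)"
  shows "cyclic_action (integer_mod_group s \<times>\<times> quat k) M (\<lambda>(j, q). r ^ nat j * qchar a b q)"
proof -
  interpret Zs_Q: group "integer_mod_group s \<times>\<times> quat k"
    using assms(1) by (intro DirProd_group group_integer_mod_group group_quat)
  show ?thesis
  proof unfold_locales
    fix h h'
    assume "h \<in> carrier (integer_mod_group s \<times>\<times> quat k)" "h' \<in> carrier (integer_mod_group s \<times>\<times> quat k)"
    then obtain j q l q' where h: "h = (j, q)" "h' = (l, q')" "0 \<le> j" "0 \<le> l"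
      and q: "q \<in> carrier (quat k)" "q' \<in> carrier (quat k)"
      using \<open>0 < s\<close> by (auto simp: carrier_integer_mod_group)
    have "nat ((j + l) mod int s) = (nat j + nat l) mod s"
      using h by (simp add: nat_mod_distrib nat_add_distrib)
    then have "[r ^ nat ((j + l) mod int s) = r ^ nat j * r ^ nat l] (mod M)"
      using cong_pow_mod_order [OF r, of "nat j + nat l"] by (simp add: power_add cong_sym)
    moreover have "[qchar a b (q \<otimes>\<^bsub>quat k\<^esub> q') = qchar a b q * qchar a b q'] (mod M)"
      using assms q by (intro qchar_mult)
    ultimately have "[r ^ nat ((j + l) mod int s) * qchar a b (q \<otimes>\<^bsub>quat k\<^esub> q') =
        (r ^ nat j * r ^ nat l) * (qchar a b q * qchar a b q')] (mod M)"
      by (rule cong_mult)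
    then show "[(case h \<otimes>\<^bsub>integer_mod_group s \<times>\<times> quat k\<^esub> h' of (j, q) \<Rightarrow> r ^ nat j * qchar a b q) =
        (case h of (j, q) \<Rightarrow> r ^ nat j * qchar a b q) * (case h' of (j, q) \<Rightarrow> r ^ nat j * qchar a b q)] (mod M)"
      by (simp add: h mult_ac)
  qed (use assms in simp_all)
qed

lemma Csemi_eq_cyclic_semidirect:
  "Csemi m n a b = cyclic_semidirect (int m) (quat (2 ^ (n - 2))) (qchar a b)"
  by (simp add: Csemi_def cyclic_semidirect_def)

lemma group_Csemi:
  assumes "3 \<le> n" "0 < m" "[a ^ 2 = 1] (mod int m)" "[b ^ 2 = 1] (mod int m)"
  shows "group (Csemi m n a b)"
proof -
  interpret act: cyclic_action "quat (2 ^ (n - 2))" "int m" "qchar a b"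
    using assms by (intro cyclic_action_qchar) simp_all
  show ?thesis
    unfolding Csemi_eq_cyclic_semidirect by (rule act.group_cyclic_semidirect)
qed

lemma Ggrp_eq_cyclic_semidirect:
  assumes "0 < s"
  shows "Ggrp n t s r a b = cyclic_semidirect (int t) (integer_mod_group s \<times>\<times> quat (2 ^ (n - 2)))
    (\<lambda>(j, q). r ^ nat j * qchar a b q)"
  using assms by (auto simp: Ggrp_def cyclic_semidirect_def DirProd_def carrier_integer_mod_group fun_eq_iff)

lemma group_Ggrp:
  assumes "3 \<le> n" "0 < t" "0 < s" "[r ^ s = 1] (mod int t)"
    and "[a ^ 2 = 1] (mod int t)" "[b ^ 2 = 1] (mod int t)"
  shows "group (Ggrp n t s r a b)"
proof -
  interpret act: cyclic_action "integer_mod_group s \<times>\<times> quat (2 ^ (n - 2))" "int t"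
    "\<lambda>(j, q). r ^ nat j * qchar a b q"
    using assms by (intro cyclic_action_power_qchar) simp_all
  show ?thesis
    unfolding Ggrp_eq_cyclic_semidirect [OF \<open>0 < s\<close>] by (rule act.group_cyclic_semidirect)
qed

lemma hom_Ggrp_Csemi:
  assumes "0 < m" and m_dvd_t: "int m dvd int t" and r: "[r = 1] (mod int m)"
  shows "(\<lambda>(i, j, q). (i mod int m, q)) \<in> hom (Ggrp n t s r a b) (Csemi m n a b)"
proof (rule homI)
  fix x
  assume "x \<in> carrier (Ggrp n t s r a b)"
  then show "(\<lambda>(i, j, q). (i mod int m, q)) x \<in> carrier (Csemi m n a b)"
    using \<open>0 < m\<close> by (auto simp: Ggrp_def Csemi_def)
next
  fix x y :: "int \<times> int \<times> int \<times> bool"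
  obtain i j q k l q' where xy: "x = (i, j, q)" "y = (k, l, q')"
    by (cases x, cases y)
  have "[r ^ nat j = 1] (mod int m)"
    using cong_pow [OF r] by simp
  moreover have "[k = k mod int m] (mod int m)"
    by (simp add: cong_def)
  ultimately have "[i + r ^ nat j * qchar a b q * k = i + 1 * qchar a b q * (k mod int m)] (mod int m)"
    by (intro cong_add cong_mult cong_refl)
  then show "(\<lambda>(i, j, q). (i mod int m, q)) (x \<otimes>\<^bsub>Ggrp n t s r a b\<^esub> y) =
      (\<lambda>(i, j, q). (i mod int m, q)) x \<otimes>\<^bsub>Csemi m n a b\<^esub> (\<lambda>(i, j, q). (i mod int m, q)) y"
    by (simp add: xy Ggrp_def Csemi_def mod_mod_cancel [OF m_dvd_t] cong_def mod_add_left_eq)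
qed

lemma Ggrp_epi_Csemi:
  assumes "0 < t" "0 < s" "0 < m" "m dvd t" "[r = 1] (mod int m)"
  shows "epi (Ggrp n t s r a b) (Csemi m n a b) \<noteq> {}"
proof -
  have "(\<lambda>(i, j, q). (i mod int m, q)) \<in> hom (Ggrp n t s r a b) (Csemi m n a b)"
    using assms by (intro hom_Ggrp_Csemi) simp_all
  moreover have "carrier (Csemi m n a b) \<subseteq> (\<lambda>(i, j, q). (i mod int m, q)) ` carrier (Ggrp n t s r a b)"
  proof
    fix x
    assume "x \<in> carrier (Csemi m n a b)"
    then obtain i q where x: "x = (i, q)" "i \<in> {0..<int m}" "q \<in> carrier (quat (2 ^ (n - 2)))"
      by (auto simp: Csemi_def)
    moreover have "(i, 0, q) \<in> carrier (Ggrp n t s r a b)"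
      using x \<open>0 < s\<close> dvd_imp_le [OF \<open>m dvd t\<close> \<open>0 < t\<close>] by (auto simp: Ggrp_def)
    ultimately show "x \<in> (\<lambda>(i, j, q). (i mod int m, q)) ` carrier (Ggrp n t s r a b)"
      by (auto intro!: image_eqI [of _ _ "(i, 0, q)"])
  qed
  ultimately show ?thesis
    by (auto simp: epi_iff_subset)
qed

section \<open>Surjections of Ggrp onto a generalized quaternion group\<close>

(* In G, the elements u, (0, j, 0, False) and (0, 0, q) are u, v^j and q of C_t semidirect C_s
   semidirect Q_2^n. *)
locale Ggrp_epi_quat =
  fixes n t s m :: nat and r a b :: int and \<phi> :: "int \<times> int \<times> int \<times> bool \<Rightarrow> int \<times> bool"
  assumes n_ge_3: "3 \<le> n" and odd_t: "odd t" and odd_s: "odd s" and odd_m: "odd m"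
    and r_pow_s: "[r ^ s = 1] (mod int t)"
    and a_sq: "[a ^ 2 = 1] (mod int t)" and b_sq: "[b ^ 2 = 1] (mod int t)"
    and epi: "\<phi> \<in> epi (Ggrp n t s r a b) (quat (2 ^ (n - 2) * m))"
begin

abbreviation Q where "Q \<equiv> quat (2 ^ (n - 2))"
abbreviation P where "P \<equiv> quat (2 ^ (n - 2) * m)"
abbreviation H where "H \<equiv> integer_mod_group s \<times>\<times> Q"
abbreviation G where "G \<equiv> cyclic_semidirect (int t) H (\<lambda>(j, q). r ^ nat j * qchar a b q)"
abbreviation u where "u \<equiv> (1 mod int t, 0, 0, False)"

lemma params_pos: "0 < t" "0 < s" "0 < m" "0 < (2::nat) ^ (n - 2)" "even ((2::nat) ^ (n - 2))"
  "0 < (2::nat) ^ (n - 2) * m"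
  using odd_t odd_s odd_m n_ge_3 by (auto intro!: odd_pos)

lemma modulus_P_gt_1: "1 < 2 * int (2 ^ (n - 2) * m)"
  using params_pos(6) by linarith

lemma modulus_P: "2 * int (2 ^ (n - 2) * m) = 2 ^ (n - 1) * int m"
proof -
  have "n - 1 = Suc (n - 2)"
    using n_ge_3 by simp
  then show ?thesis
    by simp
qed

lemma carrier_Zs [simp]: "carrier (integer_mod_group s) = {0..<int s}"
  using params_pos by (simp add: carrier_integer_mod_group)

sublocale act: cyclic_action H "int t" "\<lambda>(j, q). r ^ nat j * qchar a b q"
  using params_pos r_pow_s a_sq b_sq by (intro cyclic_action_power_qchar) simp_all

sublocale G: group G
  by (rule act.group_cyclic_semidirect)

sublocale P: group P
  using params_pos by (intro group_quat) simp

sublocale Q: group Q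
  using params_pos by (intro group_quat) simp

lemma phi_hom: "\<phi> \<in> hom G P" and phi_surj: "\<phi> ` carrier G = carrier P"
  using epi params_pos by (simp_all add: epi_def Ggrp_eq_cyclic_semidirect)

sublocale \<phi>: group_hom G P \<phi>
  using phi_hom by unfold_locales

lemma phi_one: "\<phi> (0, 0, 0, False) = (0, False)"
  using \<phi>.hom_one by simp

lemma rotation_of_odd_order:
  assumes "x \<in> carrier G" "x [^]\<^bsub>G\<^esub> (N::nat) = \<one>\<^bsub>G\<^esub>" "odd N"
  shows "\<not> snd (\<phi> x)"
proof -
  have "\<phi> x [^]\<^bsub>P\<^esub> N = \<one>\<^bsub>P\<^esub>"
    using assms by (simp only: \<phi>.hom_nat_pow [symmetric] \<phi>.hom_one)
  with \<open>odd N\<close> show ?thesis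
    using snd_quat_pow [where x = "\<phi> x" and N = N and k = "2 ^ (n - 2) * m"] by simp
qed

lemma generator_carrier: "u \<in> carrier G"
  using params_pos by (simp add: carrier_quat)

lemma generator_int_pow: "u [^]\<^bsub>G\<^esub> (z::int) = (z mod int t, 0, 0, False)"
  using act.generator_int_pow [of z] by simp

lemma generator_pow_t: "u [^]\<^bsub>G\<^esub> t = \<one>\<^bsub>G\<^esub>"
  using generator_int_pow [of "int t"] by (simp add: int_pow_int)

definition \<gamma> where "\<gamma> = fst (\<phi> u)"

lemma phi_generator: "\<phi> u = (\<gamma>, False)"
  using rotation_of_odd_order [OF generator_carrier generator_pow_t odd_t]
  by (cases "\<phi> u") (simp add: \<gamma>_def)

lemma phi_generator_pow: "\<phi> u [^]\<^bsub>P\<^esub> (z::int) = ((z * \<gamma>) mod (2 * int (2 ^ (n - 2) * m)), False)"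
  by (simp only: phi_generator quat_rotation_int_pow [OF params_pos(6)])

lemma phi_generator_int_pow: "\<phi> (u [^]\<^bsub>G\<^esub> z) = ((z * \<gamma>) mod (2 * int (2 ^ (n - 2) * m)), False)"
  using generator_carrier by (simp only: \<phi>.hom_int_pow phi_generator_pow)

lemma modulus_P_dvd_t_gamma: "2 * int (2 ^ (n - 2) * m) dvd int t * \<gamma>"
  using phi_generator_int_pow [of "int t"] by (simp add: generator_int_pow phi_one dvd_eq_mod_eq_0)

lemma decompose_element:
  assumes "(i, j, q) \<in> carrier G"
  shows "(i, j, q) = u [^]\<^bsub>G\<^esub> i \<otimes>\<^bsub>G\<^esub> ((0, j, 0, False) \<otimes>\<^bsub>G\<^esub> (0, 0, q))"
  using assms by (cases q) (simp add: generator_int_pow carrier_quat quat_mult)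

lemma Zs_nat_pow: "(0, j, 0, False) [^]\<^bsub>G\<^esub> (N::nat) = (0, (int N * j) mod int s, 0, False)"
  by (induction N) (simp_all add: quat_mult mod_add_right_eq distrib_right add.commute)

lemma Zs_pow_s: "(0, j, 0, False) [^]\<^bsub>G\<^esub> s = \<one>\<^bsub>G\<^esub>"
  by (simp add: Zs_nat_pow)

lemma phi_three_factors:
  assumes "(i, j, q) \<in> carrier G"
  shows "\<phi> (i, j, q) = \<phi> (u [^]\<^bsub>G\<^esub> i) \<otimes>\<^bsub>P\<^esub> (\<phi> (0, j, 0, False) \<otimes>\<^bsub>P\<^esub> \<phi> (0, 0, q))"
proof -
  have carrier: "u [^]\<^bsub>G\<^esub> i \<in> carrier G" "(0, j, 0, False) \<in> carrier G" "(0, 0, q) \<in> carrier G"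
    using assms params_pos G.int_pow_closed [OF generator_carrier] by (auto simp: carrier_quat)
  have "\<phi> (i, j, q) = \<phi> (u [^]\<^bsub>G\<^esub> i) \<otimes>\<^bsub>P\<^esub> \<phi> ((0, j, 0, False) \<otimes>\<^bsub>G\<^esub> (0, 0, q))"
    using carrier by (subst decompose_element [OF assms]) (intro \<phi>.hom_mult G.m_closed)
  also have "\<phi> ((0, j, 0, False) \<otimes>\<^bsub>G\<^esub> (0, 0, q)) = \<phi> (0, j, 0, False) \<otimes>\<^bsub>P\<^esub> \<phi> (0, 0, q)"
    using carrier by (intro \<phi>.hom_mult)
  finally show ?thesis .
qed

lemma exists_reflection_image:
  obtains q where "q \<in> carrier Q" "snd (\<phi> (0, 0, q))"
proof -
  have "(0, True) \<in> carrier P"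
    using params_pos by (simp add: carrier_quat)
  then have "(0, True) \<in> \<phi> ` carrier G"
    by (simp only: phi_surj)
  then obtain x where x: "x \<in> carrier G" "\<phi> x = (0, True)"
    by force
  obtain i j q where ijq: "x = (i, j, q)"
    by (cases x)
  have "(0, j, 0, False) \<in> carrier G"
    using x params_pos by (simp add: ijq carrier_quat)
  then have "\<not> snd (\<phi> (0, j, 0, False))"
    using rotation_of_odd_order Zs_pow_s odd_s by blast
  moreover have "\<phi> (i, j, q) = \<phi> (u [^]\<^bsub>G\<^esub> i) \<otimes>\<^bsub>P\<^esub> (\<phi> (0, j, 0, False) \<otimes>\<^bsub>P\<^esub> \<phi> (0, 0, q))"
    using x(1) by (intro phi_three_factors) (simp add: ijq)
  with x(2) have "snd (\<phi> (u [^]\<^bsub>G\<^esub> i) \<otimes>\<^bsub>P\<^esub> (\<phi> (0, j, 0, False) \<otimes>\<^bsub>P\<^esub> \<phi> (0, 0, q)))"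
    by (simp add: ijq)
  ultimately have "snd (\<phi> (0, 0, q))"
    by (simp add: snd_quat_mult phi_generator_int_pow)
  moreover have "q \<in> carrier Q"
    using x by (simp add: ijq)
  ultimately show ?thesis
    using that by blast
qed

lemma phi_Zs_trivial:
  assumes "j \<in> {0..<int s}"
  shows "\<phi> (0, j, 0, False) = \<one>\<^bsub>P\<^esub>"
proof -
  obtain q where q: "q \<in> carrier Q" "snd (\<phi> (0, 0, q))"
    by (rule exists_reflection_image)
  let ?w = "(0, j, 0, False)"
  have carrier: "?w \<in> carrier G" "(0, 0, q) \<in> carrier G"
    using assms q params_pos by (simp_all add: carrier_quat)
  have "?w \<otimes>\<^bsub>G\<^esub> (0, 0, q) = (0, 0, q) \<otimes>\<^bsub>G\<^esub> ?w"
    using assms q by (cases q) (simp add: carrier_quat quat_mult)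
  then have "\<phi> ?w \<otimes>\<^bsub>P\<^esub> \<phi> (0, 0, q) = \<phi> (0, 0, q) \<otimes>\<^bsub>P\<^esub> \<phi> ?w"
    using carrier by (simp only: \<phi>.hom_mult [symmetric])
  moreover obtain d where "\<phi> ?w = (d, False)"
    using rotation_of_odd_order [OF carrier(1) Zs_pow_s odd_s] by (cases "\<phi> ?w") simp
  moreover obtain e where "\<phi> (0, 0, q) = (e, True)"
    using q(2) by (cases "\<phi> (0, 0, q)") simp
  ultimately have "\<phi> ?w [^]\<^bsub>P\<^esub> (2::nat) = \<one>\<^bsub>P\<^esub>"
    by (simp add: quat_rotation_commute_reflection)
  moreover have "\<phi> ?w [^]\<^bsub>P\<^esub> s = \<one>\<^bsub>P\<^esub>"
    using carrier(1) by (simp only: \<phi>.hom_nat_pow [symmetric] Zs_pow_s \<phi>.hom_one)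
  moreover have "coprime 2 s"
    using odd_s by simp
  ultimately show ?thesis
    using P.pow_eq_one_coprime [of "\<phi> ?w" 2 s] carrier(1) by simp
qed

lemma phi_decompose:
  assumes "(i, j, q) \<in> carrier G"
  shows "\<phi> (i, j, q) = \<phi> u [^]\<^bsub>P\<^esub> i \<otimes>\<^bsub>P\<^esub> \<phi> (0, 0, q)"
proof -
  have "(0, 0, q) \<in> carrier G"
    using assms params_pos by (simp add: carrier_quat)
  then have "\<phi> (0, 0, q) \<in> carrier P"
    by (rule \<phi>.hom_closed)
  moreover have "j \<in> {0..<int s}"
    using assms by simp
  ultimately show ?thesis
    using phi_three_factors [OF assms]
    by (simp only: \<phi>.hom_int_pow [OF generator_carrier] phi_Zs_trivial P.l_one)
qed

lemma order_Q: "order Q = 2 ^ n"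
proof -
  have "order Q = 4 * 2 ^ (n - 2)"
    by (simp add: order_def card_quat)
  also have "\<dots> = 2 ^ (2 + (n - 2))"
    by (simp add: power_add)
  also have "2 + (n - 2) = n"
    using n_ge_3 by simp
  finally show ?thesis .
qed

lemma embedded_Q_nat_pow: "(0, 0, q) [^]\<^bsub>G\<^esub> (N::nat) = (0, 0, q [^]\<^bsub>Q\<^esub> N)"
  by (induction N) simp_all

lemma phi_embedded_Q_pow_order:
  assumes "q \<in> carrier Q"
  shows "\<phi> (0, 0, q) [^]\<^bsub>P\<^esub> ((2::nat) ^ n) = \<one>\<^bsub>P\<^esub>"
proof -
  have "(0, 0, q) [^]\<^bsub>G\<^esub> ((2::nat) ^ n) = \<one>\<^bsub>G\<^esub>"
    using Q.pow_order_eq_1 [OF assms] by (simp add: embedded_Q_nat_pow order_Q)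
  moreover have "(0, 0, q) \<in> carrier G"
    using assms params_pos by simp
  ultimately show ?thesis
    by (simp only: \<phi>.hom_nat_pow [symmetric] \<phi>.hom_one)
qed

lemma m_dvd_embedded_Q_rotation:
  assumes "q \<in> carrier Q" "\<phi> (0, 0, q) = (y, False)"
  shows "int m dvd y"
proof -
  have "(y, False) [^]\<^bsub>P\<^esub> ((2::nat) ^ n) = \<one>\<^bsub>P\<^esub>"
    using phi_embedded_Q_pow_order [OF assms(1)] assms(2) by simp
  then have "2 * int (2 ^ (n - 2) * m) dvd 2 ^ n * y"
    by (simp add: quat_rotation_nat_pow dvd_eq_mod_eq_0)
  then have "int m dvd 2 ^ n * y"
    by (rule dvd_trans [rotated]) simp
  moreover have "coprime (int m) (2 ^ n)"
    using odd_m by simp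
  ultimately show ?thesis
    by (simp add: coprime_dvd_mult_right_iff)
qed

lemma gamma_invertible:
  obtains i where "[i * \<gamma> = 1] (mod int m)"
proof -
  have "(1, False) \<in> carrier P"
    using modulus_P_gt_1 by (simp add: carrier_quat)
  then have "(1, False) \<in> \<phi> ` carrier G"
    by (simp only: phi_surj)
  then obtain x where x: "x \<in> carrier G" "\<phi> x = (1, False)"
    by force
  obtain i j q where ijq: "x = (i, j, q)"
    by (cases x)
  obtain y f where yf: "\<phi> (0, 0, q) = (y, f)"
    by (cases "\<phi> (0, 0, q)")
  have "(1, False) = \<phi> u [^]\<^bsub>P\<^esub> i \<otimes>\<^bsub>P\<^esub> \<phi> (0, 0, q)"
    using x phi_decompose [of i j q] by (simp add: ijq)
  then have "\<not> f" and "[i * \<gamma> + y = 1] (mod 2 * int (2 ^ (n - 2) * m))"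
    using modulus_P_gt_1 by (simp_all add: phi_generator_pow yf quat_mult cong_def mod_add_left_eq)
  from this(2) have "[i * \<gamma> + y = 1] (mod int m)"
    by (rule cong_dvd_modulus) simp
  moreover have "[y = 0] (mod int m)"
    using m_dvd_embedded_Q_rotation [of q y] x yf \<open>\<not> f\<close> by (simp add: ijq cong_0_iff)
  ultimately have "[i * \<gamma> = 1] (mod int m)"
    by (metis add.right_neutral cong_add_lcancel cong_sym cong_trans)
  then show ?thesis
    by (rule that)
qed

lemma m_dvd_t: "m dvd t"
proof -
  obtain i where i: "[i * \<gamma> = 1] (mod int m)"
    by (rule gamma_invertible)
  have "int m dvd 2 * int (2 ^ (n - 2) * m)"
    by simp
  then have t\<gamma>: "[int t * \<gamma> = 0] (mod int m)"
    using modulus_P_dvd_t_gamma unfolding cong_0_iff by (rule dvd_trans)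
  have "[int t = int t * (i * \<gamma>)] (mod int m)"
    using cong_scalar_left [OF i, of "int t"] by (simp add: cong_sym)
  also have "int t * (i * \<gamma>) = i * (int t * \<gamma>)"
    by simp
  also have "[\<dots> = i * 0] (mod int m)"
    using t\<gamma> by (rule cong_scalar_left)
  finally show ?thesis
    by (simp add: cong_0_iff)
qed

lemma r_gamma: "[r * \<gamma> = \<gamma>] (mod int m)"
proof -
  let ?v = "(0, 1 mod int s, 0, False)"
  let ?e = "r ^ nat (1 mod int s)"
  have v: "?v \<in> carrier G"
    using params_pos by (simp add: carrier_quat)
  have "?v \<otimes>\<^bsub>G\<^esub> u = u [^]\<^bsub>G\<^esub> ?e \<otimes>\<^bsub>G\<^esub> ?v"
    using act.cyclic_semidirect_twist [of "(1 mod int s, 0, False)"] params_pos by (simp add: carrier_quat)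
  moreover have "u [^]\<^bsub>G\<^esub> ?e \<in> carrier G"
    by (rule G.int_pow_closed [OF generator_carrier])
  ultimately have "\<phi> ?v \<otimes>\<^bsub>P\<^esub> \<phi> u = \<phi> (u [^]\<^bsub>G\<^esub> ?e) \<otimes>\<^bsub>P\<^esub> \<phi> ?v"
    using v generator_carrier by (simp only: \<phi>.hom_mult [symmetric])
  moreover have "\<phi> ?v = \<one>\<^bsub>P\<^esub>"
    using params_pos by (intro phi_Zs_trivial) simp
  ultimately have "\<phi> u = \<phi> (u [^]\<^bsub>G\<^esub> ?e)"
    using \<phi>.hom_closed [OF generator_carrier] \<phi>.hom_closed [OF \<open>u [^]\<^bsub>G\<^esub> ?e \<in> carrier G\<close>]
    by (simp only: P.l_one P.r_one)
  then have "[?e * \<gamma> = \<gamma>] (mod 2 * int (2 ^ (n - 2) * m))"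
    using \<phi>.hom_closed [OF generator_carrier]
    by (simp add: phi_generator phi_generator_int_pow cong_def carrier_quat)
  then have "[?e * \<gamma> = \<gamma>] (mod int m)"
    by (rule cong_dvd_modulus) simp
  moreover have "[r ^ 1 = ?e] (mod int t)"
    using cong_pow_mod_order [OF r_pow_s, of 1] params_pos by (simp add: nat_mod_distrib)
  then have "[r = ?e] (mod int m)"
    using m_dvd_t by (simp add: cong_dvd_modulus)
  ultimately show ?thesis
    by (metis cong_scalar_right cong_trans)
qed

lemma r_cong_1: "[r = 1] (mod int m)"
proof -
  obtain i where i: "[i * \<gamma> = 1] (mod int m)"
    by (rule gamma_invertible)
  have "[r = r * (i * \<gamma>)] (mod int m)"
    using cong_scalar_left [OF i, of r] by (simp add: cong_sym)
  also have "r * (i * \<gamma>) = i * (r * \<gamma>)"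
    by simp
  also have "[\<dots> = i * \<gamma>] (mod int m)"
    using r_gamma by (rule cong_scalar_left)
  finally show ?thesis
    using i by (rule cong_trans)
qed

lemma embedded_Q_hom: "(\<lambda>q. \<phi> (0, 0, q)) \<in> hom Q P"
proof (rule homI)
  fix q q'
  assume q: "q \<in> carrier Q" "q' \<in> carrier Q"
  then have "(0, 0, q) \<in> carrier G" "(0, 0, q') \<in> carrier G"
    using params_pos by simp_all
  then have "\<phi> ((0, 0, q) \<otimes>\<^bsub>G\<^esub> (0, 0, q')) = \<phi> (0, 0, q) \<otimes>\<^bsub>P\<^esub> \<phi> (0, 0, q')"
    by (rule \<phi>.hom_mult)
  then show "\<phi> (0, 0, q \<otimes>\<^bsub>Q\<^esub> q') = \<phi> (0, 0, q) \<otimes>\<^bsub>P\<^esub> \<phi> (0, 0, q')"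
    by simp
qed (use params_pos in simp)

lemma phi_generator_pow_m: "\<phi> u [^]\<^bsub>P\<^esub> int m = \<one>\<^bsub>P\<^esub>"
proof -
  have "2 ^ (n - 1) dvd int t * \<gamma>"
    using modulus_P_dvd_t_gamma unfolding modulus_P by (rule dvd_mult_left)
  moreover have "coprime (2 ^ (n - 1)) (int t)"
    using odd_t by simp
  ultimately have "2 ^ (n - 1) dvd \<gamma>"
    by (simp add: coprime_dvd_mult_right_iff)
  then have "2 ^ (n - 1) * int m dvd \<gamma> * int m"
    by (rule mult_dvd_mono) simp
  then have "2 * int (2 ^ (n - 2) * m) dvd int m * \<gamma>"
    unfolding modulus_P by (simp add: ac_simps)
  then show ?thesis
    by (simp add: phi_generator_pow dvd_eq_mod_eq_0)
qed

lemma phi_twist: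
  assumes "q \<in> carrier Q"
  shows "\<phi> (0, 0, q) \<otimes>\<^bsub>P\<^esub> \<phi> u = \<phi> u [^]\<^bsub>P\<^esub> qchar a b q \<otimes>\<^bsub>P\<^esub> \<phi> (0, 0, q)"
proof -
  have carrier: "(0, 0, q) \<in> carrier G" "u [^]\<^bsub>G\<^esub> qchar a b q \<in> carrier G"
    using assms params_pos G.int_pow_closed [OF generator_carrier] by simp_all
  have "(0, 0, q) \<otimes>\<^bsub>G\<^esub> u = u [^]\<^bsub>G\<^esub> qchar a b q \<otimes>\<^bsub>G\<^esub> (0, 0, q)"
    using act.cyclic_semidirect_twist [of "(0, q)"] assms params_pos by simp
  then have "\<phi> (0, 0, q) \<otimes>\<^bsub>P\<^esub> \<phi> u = \<phi> (u [^]\<^bsub>G\<^esub> qchar a b q) \<otimes>\<^bsub>P\<^esub> \<phi> (0, 0, q)"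
    using carrier generator_carrier by (simp only: \<phi>.hom_mult [symmetric])
  then show ?thesis
    by (simp only: \<phi>.hom_int_pow [OF generator_carrier])
qed

lemma hom_Csemi_P: "(\<lambda>(i, q). \<phi> u [^]\<^bsub>P\<^esub> i \<otimes>\<^bsub>P\<^esub> \<phi> (0, 0, q)) \<in> hom (Csemi m n a b) P"
  unfolding Csemi_eq_cyclic_semidirect
  using \<phi>.hom_closed [OF generator_carrier] phi_generator_pow_m phi_twist
  by (intro P.hom_from_cyclic_semidirect embedded_Q_hom)

lemma image_Csemi_P: "(\<lambda>(i, q). \<phi> u [^]\<^bsub>P\<^esub> i \<otimes>\<^bsub>P\<^esub> \<phi> (0, 0, q)) ` carrier (Csemi m n a b) = carrier P"
proof
  show "carrier P \<subseteq> (\<lambda>(i, q). \<phi> u [^]\<^bsub>P\<^esub> i \<otimes>\<^bsub>P\<^esub> \<phi> (0, 0, q)) ` carrier (Csemi m n a b)"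
  proof
    fix p
    assume "p \<in> carrier P"
    then have "p \<in> \<phi> ` carrier G"
      by (simp only: phi_surj)
    then obtain x where x: "p = \<phi> x" "x \<in> carrier G"
      by (rule imageE)
    obtain i j q where ijq: "x = (i, j, q)"
      by (cases x)
    have "p = \<phi> u [^]\<^bsub>P\<^esub> (i mod int m) \<otimes>\<^bsub>P\<^esub> \<phi> (0, 0, q)"
      using x phi_decompose [of i j q] \<phi>.hom_closed [OF generator_carrier] phi_generator_pow_m
      by (simp add: ijq P.int_pow_mod)
    moreover have "(i mod int m, q) \<in> carrier (Csemi m n a b)"
      using x params_pos by (simp add: ijq Csemi_eq_cyclic_semidirect)
    ultimately show "p \<in> (\<lambda>(i, q). \<phi> u [^]\<^bsub>P\<^esub> i \<otimes>\<^bsub>P\<^esub> \<phi> (0, 0, q)) ` carrier (Csemi m n a b)"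
      by force
  qed
qed (rule hom_carrier [OF hom_Csemi_P])

lemma P_iso_Csemi: "P \<cong> Csemi m n a b"
proof -
  let ?\<psi> = "\<lambda>(i, q). \<phi> u [^]\<^bsub>P\<^esub> i \<otimes>\<^bsub>P\<^esub> \<phi> (0, 0, q)"
  have "int m dvd int t"
    using m_dvd_t by simp
  then have "group (Csemi m n a b)"
    using params_pos cong_dvd_modulus [OF a_sq] cong_dvd_modulus [OF b_sq]
    by (intro group_Csemi) simp_all
  have "finite (carrier (Csemi m n a b))"
    by (simp add: Csemi_def carrier_quat)
  moreover have "card (carrier (Csemi m n a b)) = card (carrier P)"
    by (simp add: Csemi_def card_cartesian_product card_quat)
  ultimately have "inj_on ?\<psi> (carrier (Csemi m n a b))"
    using image_Csemi_P by (intro eq_card_imp_inj_on) simp_all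
  then have "Csemi m n a b \<cong> P"
    using hom_Csemi_P image_Csemi_P by (auto simp: is_iso_def iso_def bij_betw_def)
  with \<open>group (Csemi m n a b)\<close> show ?thesis
    by (rule group.iso_sym)
qed

end

theorem lemma1p7:
  fixes n t s m :: nat and r a b :: int
  assumes "n \<ge> 3" and "t \<ge> 1" and "s \<ge> 1" and "odd t" and "odd s" and "coprime t s"
    and "[r ^ s = 1] (mod int t)"
    and "[a ^ 2 = 1] (mod int t)" and "[b ^ 2 = 1] (mod int t)"
    and "m \<ge> 1" and "odd m"
  shows "(\<exists>N. N \<lhd> Ggrp n t s r a b \<and> Ggrp n t s r a b Mod N \<cong> quat (2 ^ (n - 2) * m))
     \<longleftrightarrow> (m dvd t \<and> [r = 1] (mod int m) \<and> quat (2 ^ (n - 2) * m) \<cong> Csemi m n a b)"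
proof -
  let ?G = "Ggrp n t s r a b" and ?P = "quat (2 ^ (n - 2) * m)" and ?C = "Csemi m n a b"
  have "group ?G"
    using assms by (intro group_Ggrp) simp_all
  moreover have P: "group ?P"
    using assms by (intro group_quat) simp
  ultimately have "(\<exists>N. N \<lhd> ?G \<and> ?G Mod N \<cong> ?P) \<longleftrightarrow> epi ?G ?P \<noteq> {}"
    by (rule group.quotient_iso_iff_epi)
  also have "\<dots> \<longleftrightarrow> m dvd t \<and> [r = 1] (mod int m) \<and> ?P \<cong> ?C"
  proof
    assume "epi ?G ?P \<noteq> {}"
    then obtain \<phi> where "\<phi> \<in> epi ?G ?P"
      by blast
    then interpret Ggrp_epi_quat n t s m r a b \<phi>
      using assms by unfold_locales simp_all
    show "m dvd t \<and> [r = 1] (mod int m) \<and> ?P \<cong> ?C"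
      using m_dvd_t r_cong_1 P_iso_Csemi by blast
  next
    assume conditions: "m dvd t \<and> [r = 1] (mod int m) \<and> ?P \<cong> ?C"
    then have "epi ?G ?C \<noteq> {}"
      using assms by (intro Ggrp_epi_Csemi) simp_all
    moreover obtain \<psi> where "\<psi> \<in> iso ?C ?P"
      using conditions group.iso_sym [OF P] by (auto simp: is_iso_def)
    ultimately show "epi ?G ?P \<noteq> {}"
      by (auto simp: iso_iff_mon_epi dest: epi_compose)
  qed
  finally show ?thesis .
qed

end
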